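(* Let $U\subset\mathbb R^n$ be open, $X$ a $C^1$ vector field on $U$, $f=(f_0,f_1,\dots,f_\ell):U\to\mathbb R^{r+\ell}$ a $C^2$ map, $x_0\in U$, $K$ a constant symmetric positive definite $(r+\ell)\times(r+\ell)$ matrix, and $V(x)=\tfrac12(f(x)-f(x_0))^TK(f(x)-f(x_0))$. Assume $\nabla V(x)\cdot X(x)=0$ for all $x\in U$, $V^{-1}(0)$ is compact, and $Df(x)$ is onto for all $x\in V^{-1}(0)$. Then there is a number $c>0$ (and, if necessary, an open neighborhood $W\subset U$ of $V^{-1}(0)$ to which the system is restricted) such that every trajectory of $\dot x = X(x)-\nabla V(x)$ starting in $V^{-1}([0,c])$ remains in $V^{-1}([0,c])$ for all $t\ge0$ and converges to $V^{-1}(0)$ as $t\to\infty$. *)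

theory Defs
  imports "HOL-Analysis.Analysis"
begin

definition C1_on :: "'a::real_normed_vector set \<Rightarrow> ('a \<Rightarrow> 'b::real_normed_vector) \<Rightarrow> bool" where
  "C1_on U g \<longleftrightarrow> (\<exists>g'. (\<forall>x\<in>U. (g has_derivative blinfun_apply (g' x)) (at x)) \<and> continuous_on U g')"

definition C2_on :: "'a::real_normed_vector set \<Rightarrow> ('a \<Rightarrow> 'b::real_normed_vector) \<Rightarrow> bool" where
  "C2_on U g \<longleftrightarrow> (\<exists>g'. (\<forall>x\<in>U. (g has_derivative blinfun_apply (g' x)) (at x)) \<and> C1_on U g')"

definition sym_pos_def :: "real^'m^'m \<Rightarrow> bool" where
  "sym_pos_def K \<longleftrightarrow> transpose K = K \<and> (\<forall>v. v \<noteq> 0 \<longrightarrow> v \<bullet> (K *v v) > 0)"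

definition grad :: "(real^'n \<Rightarrow> real) \<Rightarrow> real^'n \<Rightarrow> real^'n" where
  "grad g x = (\<chi> i. frechet_derivative g (at x) (axis i 1))"

definition is_solution :: "(real^'n \<Rightarrow> real^'n) \<Rightarrow> (real^'n) set \<Rightarrow> real set \<Rightarrow> (real \<Rightarrow> real^'n) \<Rightarrow> bool" where
  "is_solution F W I y \<longleftrightarrow> (\<forall>t\<in>I. y t \<in> W \<and> (y has_vector_derivative F (y t)) (at t within I))"

end

theory Submission
  imports Defs
begin

text \<open>Since \<open>\<nabla>V \<bullet> X = 0\<close>, along solutions of \<open>x' = X x - \<nabla>V x\<close> we have
  \<open>d/dt V(x(t)) = -|\<nabla>V(x(t))|\<^sup>2\<close>, and \<open>\<nabla>V x = Df(x)\<^sup>T K (f x - f x\<^sub>0)\<close>. As \<open>Df\<close> is onto on the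
  compact set \<open>Z = V\<^sup>-\<^sup>1(0)\<close>, \<open>Df(x)\<^sup>T\<close> stays injective near \<open>Z\<close>, so there \<open>\<nabla>V\<close> vanishes only on
  \<open>Z\<close>. Pick \<open>r\<close> so that this holds on the closed \<open>r\<close>-neighbourhood of \<open>Z\<close>, which lies in \<open>U\<close>, and
  \<open>c\<close> below the minimum of \<open>V\<close> on the shell \<open>r/2 \<le> dist(x, Z) \<le> r\<close>. A trajectory starting in
  \<open>{V \<le> c}\<close> within distance \<open>r\<close> of \<open>Z\<close> never reaches the shell because \<open>V\<close> does not increase,
  so it stays in a compact set on which \<open>|\<nabla>V|\<close> is bounded below away from \<open>Z\<close>; hence \<open>V\<close> tends
  to \<open>0\<close> along it, and so does its distance to \<open>Z\<close>. Solutions exist for all time because the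
  field agrees near \<open>Z\<close> with a bounded, globally Lipschitz cutoff, whose solutions are obtained
  by Banach's fixed point theorem in an exponentially weighted sup norm.\<close>

section \<open>Global solutions of bounded Lipschitz equations\<close>

lemma integral_has_vector_derivative_atLeast:
  fixes g :: "real \<Rightarrow> 'a::banach"
  assumes "continuous_on {a..} g" "a \<le> t"
  shows "((\<lambda>u. integral {a..u} g) has_vector_derivative g t) (at t within {a..})"
proof -
  have "((\<lambda>u. integral {a..u} g) has_vector_derivative g t) (at t within {a..t+1})"
    by (rule integral_has_vector_derivative) (use assms in \<open>auto intro: continuous_on_subset\<close>)
  moreover have "at t within {a..t+1} = at t within {a..}"
    by (rule at_within_nhd[where S="{..<t+1}"]) auto
  ultimately show ?thesis by simp
qed

lemma integral_lipschitz_exp_weighted_bound: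
  fixes G :: "'a::banach \<Rightarrow> 'a"
  assumes lip: "L-lipschitz_on UNIV G" and "0 < L" "0 \<le> c"
    and cont: "continuous_on {0..c} u" "continuous_on {0..c} v"
    and dist_uv: "\<And>s. s \<in> {0..c} \<Longrightarrow> dist (u s) (v s) \<le> d * exp (2 * L * s)"
  shows "norm (integral {0..c} (\<lambda>s. G (u s)) - integral {0..c} (\<lambda>s. G (v s)))
           \<le> d/2 * exp (2 * L * c)"
proof -
  have Gcont: "continuous_on {0..c} (\<lambda>s. G (w s))" if "continuous_on {0..c} w" for w
    using continuous_on_compose2[OF lipschitz_on_continuous_on[OF lip] that] by simp
  have "d \<ge> 0"
    using order_trans[OF zero_le_dist dist_uv[of 0]] \<open>0 \<le> c\<close> by simp
  have "integral {0..c} (\<lambda>s. G (u s)) - integral {0..c} (\<lambda>s. G (v s))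
          = integral {0..c} (\<lambda>s. G (u s) - G (v s))"
    by (rule integral_diff[symmetric]) (auto intro!: integrable_continuous_real Gcont cont)
  also have "norm \<dots> \<le> integral {0..c} (\<lambda>s. L * d * exp (2 * L * s))"
  proof (rule integral_norm_bound_integral)
    show "(\<lambda>s. G (u s) - G (v s)) integrable_on {0..c}"
      by (auto intro!: integrable_continuous_real continuous_on_diff Gcont cont)
    show "(\<lambda>s. L * d * exp (2 * L * s)) integrable_on {0..c}"
      by (auto intro!: integrable_continuous_real continuous_intros)
    fix s assume "s \<in> {0..c}"
    then show "norm (G (u s) - G (v s)) \<le> L * d * exp (2 * L * s)"
      using lipschitz_onD[OF lip, of "u s" "v s"] dist_uv[of s] \<open>0 < L\<close>
      by (auto simp: dist_norm mult.assoc intro: order_trans[OF _ mult_left_mono])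
  qed
  also have "integral {0..c} (\<lambda>s. L * d * exp (2 * L * s)) = d/2 * exp (2 * L * c) - d/2 * exp (2 * L * 0)"
  proof (rule integral_unique, rule fundamental_theorem_of_calculus)
    fix s assume "s \<in> {0..c}"
    show "((\<lambda>s. d/2 * exp (2 * L * s)) has_vector_derivative L * d * exp (2 * L * s)) (at s within {0..c})"
      unfolding has_real_derivative_iff_has_vector_derivative[symmetric]
      by (auto intro!: derivative_eq_intros)
  qed (fact \<open>0 \<le> c\<close>)
  also have "\<dots> \<le> d/2 * exp (2 * L * c)"
    using \<open>d \<ge> 0\<close> by simp
  finally show ?thesis .
qed

text \<open>For \<open>t \<ge> 0\<close>, \<open>y t = exp (2 L t) z t\<close> solves \<open>y t = p + \<integral>\<^sub>0\<^sup>t G (y s) ds\<close> iff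
  \<open>z = weighted_picard L G p z\<close>; the weight makes this a contraction for the sup norm.
  Negative times are clamped to \<open>0\<close> so that the result is bounded and continuous on all of \<open>\<real>\<close>.\<close>
definition weighted_picard :: "real \<Rightarrow> ('a::banach \<Rightarrow> 'a) \<Rightarrow> 'a \<Rightarrow> (real \<Rightarrow>\<^sub>C 'a) \<Rightarrow> real \<Rightarrow> 'a"
  where "weighted_picard L G p z t = (1 / exp (2 * L * max 0 t)) *\<^sub>R
           (p + integral {0..max 0 t} (\<lambda>s. G (exp (2 * L * max 0 s) *\<^sub>R z s)))"

lemma continuous_on_weighted_field:
  fixes G :: "'a::banach \<Rightarrow> 'a" and z :: "real \<Rightarrow>\<^sub>C 'a"
  assumes "continuous_on UNIV G"
  shows "continuous_on A (\<lambda>s. G (exp (2 * L * max 0 s) *\<^sub>R apply_bcontfun z s))"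
proof -
  have "continuous_on A (\<lambda>s. exp (2 * L * max 0 s) *\<^sub>R apply_bcontfun z s)"
    by (intro continuous_on_scaleR continuous_on_exp continuous_on_mult continuous_on_const
        continuous_on_max continuous_on_id continuous_on_apply_bcontfun)
  then show ?thesis
    using continuous_on_compose2[OF assms] by blast
qed

lemma weighted_picard_bcontfun:
  fixes G :: "'a::banach \<Rightarrow> 'a"
  assumes "L-lipschitz_on UNIV G" "0 < L" "\<And>x. norm (G x) \<le> M"
  shows "weighted_picard L G p z \<in> bcontfun"
proof (rule bcontfun_normI)
  define H where "H s = G (exp (2 * L * max 0 s) *\<^sub>R apply_bcontfun z s)" for s
  have H_cont: "continuous_on A H" for A
    unfolding H_def by (rule continuous_on_weighted_field[OF lipschitz_on_continuous_on[OF assms(1)]])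
  have "continuous_on {0..} (\<lambda>u. integral {0..u} H)"
    unfolding continuous_on_eq_continuous_within
    using integral_has_vector_derivative_atLeast[OF H_cont] has_vector_derivative_continuous by blast
  then have "continuous_on UNIV (\<lambda>t. integral {0..max 0 t} H)"
    by (rule continuous_on_compose2) (auto intro: continuous_intros)
  then show "continuous_on UNIV (weighted_picard L G p z)"
    unfolding weighted_picard_def H_def[symmetric] by (intro continuous_intros) auto
  fix t :: real
  define E where "E = exp (2 * L * max 0 t)"
  have "0 \<le> M" using assms(3)[of 0] norm_ge_zero[of "G 0"] by linarith
  have "norm (integral {0..max 0 t} H) \<le> M * (max 0 t - 0)"
    using H_cont \<open>0 \<le> M\<close> by (intro integral_bound) (auto simp: H_def assms(3))
  then have "norm (p + integral {0..max 0 t} H) \<le> norm p + M * max 0 t"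
    using norm_triangle_ineq[of p "integral {0..max 0 t} H"] by simp
  then have "norm (weighted_picard L G p z t) \<le> (norm p + M * max 0 t) / E"
    by (simp add: weighted_picard_def H_def[symmetric] E_def divide_right_mono)
  also have "\<dots> = norm p / E + M * (max 0 t / E)"
    by (simp add: add_divide_distrib)
  also have "\<dots> \<le> norm p + M * (1 / (2 * L))"
  proof (intro add_mono mult_left_mono \<open>0 \<le> M\<close>)
    have "1 \<le> E" using \<open>0 < L\<close> by (simp add: E_def)
    then show "norm p / E \<le> norm p" by (simp add: divide_le_eq mult_le_cancel_left1)
    have "2 * L * max 0 t \<le> E" unfolding E_def using exp_ge_add_one_self[of "2 * L * max 0 t"] by linarith
    then show "max 0 t / E \<le> 1 / (2 * L)" using \<open>0 < L\<close> by (simp add: E_def field_simps)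
  qed
  finally show "norm (weighted_picard L G p z t) \<le> norm p + M * (1 / (2 * L))" .
qed

lemma weighted_picard_contraction:
  fixes G :: "'a::banach \<Rightarrow> 'a"
  assumes "L-lipschitz_on UNIV G" "0 < L"
  shows "dist (weighted_picard L G p z1 t) (weighted_picard L G p z2 t) \<le> 1/2 * dist z1 z2"
proof -
  define E where "E s = exp (2 * L * max 0 s)" for s
  have "0 < E s" for s by (simp add: E_def)
  have "norm (integral {0..max 0 t} (\<lambda>s. G (E s *\<^sub>R apply_bcontfun z1 s))
              - integral {0..max 0 t} (\<lambda>s. G (E s *\<^sub>R apply_bcontfun z2 s)))
          \<le> dist z1 z2 / 2 * exp (2 * L * max 0 t)"
  proof (rule integral_lipschitz_exp_weighted_bound[OF assms])
    fix s assume "s \<in> {0..max 0 t}"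
    then have "dist (E s *\<^sub>R apply_bcontfun z1 s) (E s *\<^sub>R apply_bcontfun z2 s)
                 = exp (2 * L * s) * dist (apply_bcontfun z1 s) (apply_bcontfun z2 s)"
      by (simp add: E_def dist_norm flip: scaleR_diff_right)
    also have "\<dots> \<le> dist z1 z2 * exp (2 * L * s)"
      using dist_bounded[of z1 s z2] by (simp add: mult.commute)
    finally show "dist (E s *\<^sub>R apply_bcontfun z1 s) (E s *\<^sub>R apply_bcontfun z2 s)
                    \<le> dist z1 z2 * exp (2 * L * s)" .
  qed (auto simp: E_def intro!: continuous_intros)
  then show ?thesis
    using \<open>0 < E t\<close>
    by (simp add: weighted_picard_def dist_norm E_def[symmetric] pos_divide_le_eq
        flip: scaleR_diff_right)
qed

theorem bounded_lipschitz_ode_solution_exists: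
  fixes G :: "'a::banach \<Rightarrow> 'a"
  assumes lip: "L-lipschitz_on UNIV G" and bound: "\<And>x. norm (G x) \<le> M"
  obtains y where "y 0 = p" "\<And>t. 0 \<le> t \<Longrightarrow> (y has_vector_derivative G (y t)) (at t within {0..})"
proof -
  define L' where "L' = max L 1"
  have lip': "L'-lipschitz_on UNIV G" and "0 < L'"
    using lipschitz_on_mono[OF lip] by (auto simp: L'_def)
  define \<Psi> where "\<Psi> z = Bcontfun (weighted_picard L' G p z)" for z
  have \<Psi>_apply: "apply_bcontfun (\<Psi> z) = weighted_picard L' G p z" for z
    unfolding \<Psi>_def using weighted_picard_bcontfun[OF lip' \<open>0 < L'\<close> bound] Bcontfun_inverse by blast
  have "dist (\<Psi> z1) (\<Psi> z2) \<le> 1/2 * dist z1 z2" for z1 z2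
    by (rule dist_bound) (unfold \<Psi>_apply, rule weighted_picard_contraction[OF lip' \<open>0 < L'\<close>])
  then obtain z where "\<Psi> z = z"
    using banach_fix_type[of "1/2" \<Psi>] by auto
  define H where "H s = G (exp (2 * L' * max 0 s) *\<^sub>R apply_bcontfun z s)" for s
  have H_cont: "continuous_on {0..} H"
    unfolding H_def by (rule continuous_on_weighted_field[OF lipschitz_on_continuous_on[OF lip']])
  have z: "exp (2 * L' * t) *\<^sub>R apply_bcontfun z t = p + integral {0..t} H" if "0 \<le> t" for t
  proof -
    have "apply_bcontfun z t = weighted_picard L' G p z t"
      using \<Psi>_apply[of z] \<open>\<Psi> z = z\<close> by simp
    also have "\<dots> = (1 / exp (2 * L' * t)) *\<^sub>R (p + integral {0..t} H)"
      using that by (simp add: weighted_picard_def H_def[abs_def] max_absorb2)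
    finally show ?thesis by simp
  qed
  show ?thesis
  proof (rule that[of "\<lambda>u. p + integral {0..u} H"])
    show "p + integral {0..0} H = p" by simp
    fix t :: real assume "0 \<le> t"
    have "((\<lambda>u. p + integral {0..u} H) has_vector_derivative H t) (at t within {0..})"
      using has_vector_derivative_add[OF has_vector_derivative_const
              integral_has_vector_derivative_atLeast[OF H_cont \<open>0 \<le> t\<close>]] by simp
    then show "((\<lambda>u. p + integral {0..u} H) has_vector_derivative G (p + integral {0..t} H))
                 (at t within {0..})"
      using z[OF \<open>0 \<le> t\<close>] \<open>0 \<le> t\<close> by (simp add: H_def)
  qed
qed

section \<open>Lipschitz estimates\<close>

lemma lipschitz_on_inner:
  fixes a b :: "'x::metric_space \<Rightarrow> 'v::real_inner"
  assumes "A-lipschitz_on S a" "B-lipschitz_on S b"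
    and "\<And>x. x \<in> S \<Longrightarrow> norm (a x) \<le> Ma" "\<And>x. x \<in> S \<Longrightarrow> norm (b x) \<le> Mb"
    and "0 \<le> Ma" "0 \<le> Mb"
  shows "(A * Mb + Ma * B)-lipschitz_on S (\<lambda>x. a x \<bullet> b x)"
proof (rule lipschitz_onI)
  have "0 \<le> A" "0 \<le> B" using assms(1,2) lipschitz_on_nonneg by auto
  then show "0 \<le> A * Mb + Ma * B" using assms(5,6) by simp
  fix x y assume "x \<in> S" "y \<in> S"
  have "dist (a x \<bullet> b x) (a y \<bullet> b y) = \<bar>(a x - a y) \<bullet> b x + a y \<bullet> (b x - b y)\<bar>"
    by (simp add: dist_real_def algebra_simps inner_diff_left inner_diff_right)
  also have "\<dots> \<le> norm (a x - a y) * norm (b x) + norm (a y) * norm (b x - b y)"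
    by (smt (verit) Cauchy_Schwarz_ineq2)
  also have "\<dots> \<le> (A * dist x y) * Mb + Ma * (B * dist x y)"
    using lipschitz_onD[OF assms(1)] lipschitz_onD[OF assms(2)] assms(3-6) \<open>0 \<le> A\<close> \<open>0 \<le> B\<close>
      \<open>x \<in> S\<close> \<open>y \<in> S\<close>
    by (intro add_mono mult_mono) (auto simp: dist_norm)
  finally show "dist (a x \<bullet> b x) (a y \<bullet> b y) \<le> (A * Mb + Ma * B) * dist x y"
    by (simp add: algebra_simps)
qed

lemma lipschitz_on_vec_lambda:
  fixes g :: "'a::metric_space \<Rightarrow> real^'n" and L :: real
  assumes "\<And>i. L-lipschitz_on S (\<lambda>x. g x $ i)"
  shows "(CARD('n) * L)-lipschitz_on S g"
proof (rule lipschitz_onI)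
  show "0 \<le> CARD('n) * L" using lipschitz_on_nonneg[OF assms] by simp
  fix x y assume "x \<in> S" "y \<in> S"
  have "dist (g x) (g y) \<le> (\<Sum>i\<in>UNIV. \<bar>(g x - g y) $ i\<bar>)"
    unfolding dist_norm by (rule norm_le_l1_cart)
  also have "\<dots> \<le> (\<Sum>i\<in>(UNIV::'n set). L * dist x y)"
    using lipschitz_onD[OF assms \<open>x \<in> S\<close> \<open>y \<in> S\<close>] by (intro sum_mono) (simp add: dist_real_def)
  finally show "dist (g x) (g y) \<le> CARD('n) * L * dist x y" by simp
qed

lemma lipschitz_on_blinfun_apply:
  assumes "L-lipschitz_on S A"
  shows "(L * norm h)-lipschitz_on S (\<lambda>x. blinfun_apply (A x) h)"
proof (rule lipschitz_onI)
  show "0 \<le> L * norm h" using lipschitz_on_nonneg[OF assms] by simp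
  fix x y assume "x \<in> S" "y \<in> S"
  have "dist (A x h) (A y h) \<le> norm (A x - A y) * norm h"
    by (metis dist_norm blinfun.diff_left norm_blinfun)
  also have "\<dots> \<le> L * dist x y * norm h"
    using lipschitz_onD[OF assms \<open>x \<in> S\<close> \<open>y \<in> S\<close>] by (intro mult_right_mono) (auto simp: dist_norm)
  finally show "dist (A x h) (A y h) \<le> L * norm h * dist x y" by (simp add: algebra_simps)
qed

lemma C1_on_imp_continuous_on:
  assumes "C1_on U g" "open U"
  shows "continuous_on U g"
  using assms unfolding C1_on_def
  by (metis at_within_open continuous_on_eq_continuous_within has_derivative_continuous)

lemma C1_on_lipschitz_on_compact_convex:
  fixes g :: "'a::euclidean_space \<Rightarrow> 'b::real_normed_vector"
  assumes "C1_on U g" "compact C" "convex C" "C \<subseteq> U"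
  obtains L where "L-lipschitz_on C g"
proof -
  obtain g' where g': "\<forall>x\<in>U. (g has_derivative blinfun_apply (g' x)) (at x)" "continuous_on U g'"
    using assms(1) by (auto simp: C1_on_def)
  have "compact (g' ` C)"
    using assms(2,4) g'(2) by (intro compact_continuous_image) (auto intro: continuous_on_subset)
  then obtain B where "0 < B" "\<And>x. x \<in> C \<Longrightarrow> norm (g' x) \<le> B"
    by (auto dest!: compact_imp_bounded simp: bounded_pos)
  then have "B-lipschitz_on C g"
    using assms(3,4) g'(1)
    by (intro bounded_derivative_imp_lipschitz[where f'="\<lambda>x. blinfun_apply (g' x)"])
       (auto intro: has_derivative_at_withinI simp flip: norm_blinfun.rep_eq)
  then show ?thesis ..
qed

lemma lipschitz_on_scaleR_cutoff:
  fixes \<phi> :: "'a::metric_space \<Rightarrow> real" and F :: "'a \<Rightarrow> 'b::real_normed_vector"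
  assumes \<phi>: "A-lipschitz_on UNIV \<phi>" "\<And>x. 0 \<le> \<phi> x \<and> \<phi> x \<le> 1" "\<And>x. x \<notin> N \<Longrightarrow> \<phi> x = 0"
    and F: "B-lipschitz_on N F" "\<And>x. x \<in> N \<Longrightarrow> norm (F x) \<le> M" and "0 \<le> M"
  shows "(A * M + B)-lipschitz_on UNIV (\<lambda>x. \<phi> x *\<^sub>R F x)"
proof (rule lipschitz_onI)
  have "0 \<le> A" "0 \<le> B" using \<phi>(1) F(1) lipschitz_on_nonneg by auto
  then show "0 \<le> A * M + B" using \<open>0 \<le> M\<close> by simp
  have one_in_N: "dist (\<phi> x *\<^sub>R F x) (\<phi> y *\<^sub>R F y) \<le> (A * M + B) * dist x y"
    if "x \<in> N" "y \<notin> N" for x y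
  proof -
    have "dist (\<phi> x *\<^sub>R F x) (\<phi> y *\<^sub>R F y) = \<bar>\<phi> x - \<phi> y\<bar> * norm (F x)"
      using \<phi>(2)[of x] \<phi>(3)[OF \<open>y \<notin> N\<close>] by (simp add: dist_norm)
    also have "\<dots> \<le> A * dist x y * M"
      using lipschitz_onD[OF \<phi>(1), of x y] F(2)[OF \<open>x \<in> N\<close>] \<open>0 \<le> A\<close>
      by (intro mult_mono) (auto simp: dist_real_def)
    also have "\<dots> \<le> (A * M + B) * dist x y"
      using \<open>0 \<le> B\<close> by (simp add: algebra_simps)
    finally show ?thesis .
  qed
  fix x y
  consider "x \<in> N" "y \<in> N" | "x \<in> N" "y \<notin> N" | "x \<notin> N" "y \<in> N" | "x \<notin> N" "y \<notin> N"
    by blast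
  then show "dist (\<phi> x *\<^sub>R F x) (\<phi> y *\<^sub>R F y) \<le> (A * M + B) * dist x y"
  proof cases
    case 1
    have "\<phi> x *\<^sub>R F x - \<phi> y *\<^sub>R F y = (\<phi> x - \<phi> y) *\<^sub>R F x + \<phi> y *\<^sub>R (F x - F y)"
      by (simp add: algebra_simps)
    then have "dist (\<phi> x *\<^sub>R F x) (\<phi> y *\<^sub>R F y) \<le> \<bar>\<phi> x - \<phi> y\<bar> * norm (F x) + \<bar>\<phi> y\<bar> * norm (F x - F y)"
      by (metis dist_norm norm_scaleR norm_triangle_ineq)
    also have "\<dots> \<le> A * dist x y * M + 1 * (B * dist x y)"
      using lipschitz_onD[OF \<phi>(1), of x y] lipschitz_onD[OF F(1), of x y] F(2)[of x] \<phi>(2)[of y] 1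
        \<open>0 \<le> A\<close> \<open>0 \<le> M\<close>
      by (intro add_mono mult_mono) (auto simp: dist_real_def dist_norm)
    finally show ?thesis by (simp add: algebra_simps)
  next
    case 2 then show ?thesis by (rule one_in_N)
  next
    case 3 then show ?thesis using one_in_N[of y x] by (simp add: dist_commute)
  next
    case 4 then show ?thesis using \<phi>(3) \<open>0 \<le> A * M + B\<close> by simp
  qed
qed

lemma lipschitz_on_infdist_cutoff:
  assumes "0 < r"
  shows "(2/r)-lipschitz_on UNIV (\<lambda>x. max 0 (min 1 (2 - 2 * infdist x Z / r)))"
proof (rule lipschitz_onI)
  fix x y
  have "\<bar>max 0 (min 1 (2 - 2 * infdist x Z / r)) - max 0 (min 1 (2 - 2 * infdist y Z / r))\<bar>
          \<le> 2 * \<bar>infdist x Z - infdist y Z\<bar> / r"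
    using \<open>0 < r\<close> by (simp add: abs_if max_def min_def field_simps)
  also have "\<dots> \<le> 2 * dist x y / r"
    using \<open>0 < r\<close> infdist_triangle_abs[of x Z y] by (intro divide_right_mono) auto
  finally show "dist (max 0 (min 1 (2 - 2 * infdist x Z / r)))
                  (max 0 (min 1 (2 - 2 * infdist y Z / r))) \<le> 2 / r * dist x y"
    by (simp add: dist_real_def)
qed (use assms in simp)

lemma lipschitz_extension_near_set:
  fixes F :: "'a::metric_space \<Rightarrow> 'b::real_normed_vector"
  assumes "B-lipschitz_on {x. infdist x Z \<le> r} F"
    and "\<And>x. infdist x Z \<le> r \<Longrightarrow> norm (F x) \<le> M" and "0 < r" "0 \<le> M"
  obtains L G where "L-lipschitz_on UNIV G" "\<And>x. norm (G x) \<le> M"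
    "\<And>x. infdist x Z \<le> r/2 \<Longrightarrow> G x = F x"
proof
  define \<phi> where "\<phi> x = max 0 (min 1 (2 - 2 * infdist x Z / r))" for x
  have \<phi>_out: "\<phi> x = 0" if "x \<notin> {x. infdist x Z \<le> r}" for x
    using that \<open>0 < r\<close> by (simp add: \<phi>_def field_simps)
  show "(2/r * M + B)-lipschitz_on UNIV (\<lambda>x. \<phi> x *\<^sub>R F x)"
    using lipschitz_on_infdist_cutoff[OF \<open>0 < r\<close>] assms(1,2,4) \<phi>_out
    by (intro lipschitz_on_scaleR_cutoff) (auto simp: \<phi>_def)
  show "norm (\<phi> x *\<^sub>R F x) \<le> M" for x
  proof (cases "infdist x Z \<le> r")
    case True
    then show ?thesis
      using assms(2)[OF True] mult_mono[of "\<phi> x" 1 "norm (F x)" M] \<open>0 \<le> M\<close> by (simp add: \<phi>_def)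
  next
    case False then show ?thesis using \<phi>_out \<open>0 \<le> M\<close> by simp
  qed
  show "\<phi> x *\<^sub>R F x = F x" if "infdist x Z \<le> r/2" for x
    using that \<open>0 < r\<close> by (simp add: \<phi>_def field_simps)
qed

section \<open>Lyapunov functions\<close>

lemma compact_continuous_pos_lower_bound:
  fixes h :: "'a::topological_space \<Rightarrow> real"
  assumes "compact S" "continuous_on S h" "\<And>x. x \<in> S \<Longrightarrow> 0 < h x"
  obtains \<eta> where "0 < \<eta>" "\<And>x. x \<in> S \<Longrightarrow> \<eta> \<le> h x"
proof (cases "S = {}")
  case False
  with continuous_attains_inf[OF assms(1) False assms(2)] assms(3) show ?thesis
    using that by blast
qed (rule that[of 1]; simp)

lemma infdist_le_subset_open:
  fixes Z :: "'a::heine_borel set"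
  assumes "compact Z" "Z \<noteq> {}" "Z \<subseteq> U" "open U"
  obtains r where "0 < r" "{x. infdist x Z \<le> r} \<subseteq> U"
proof -
  obtain \<delta> where "0 < \<delta>" and \<delta>: "\<forall>z\<in>Z. \<forall>y\<in>-U. \<delta> \<le> dist z y"
    using separate_compact_closed[of Z "-U"] assms by auto
  have "x \<in> U" if "infdist x Z \<le> \<delta>/2" for x
  proof (rule ccontr)
    assume "x \<notin> U"
    obtain z where "z \<in> Z" "infdist x Z = dist x z"
      using infdist_attains_inf[OF compact_imp_closed[OF assms(1)] assms(2)] by blast
    then have "\<delta> \<le> dist x z" using \<delta> \<open>x \<notin> U\<close> by (metis ComplI dist_commute)
    then show False using \<open>infdist x Z = dist x z\<close> that \<open>0 < \<delta>\<close> by simp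
  qed
  then show ?thesis using that[of "\<delta>/2"] \<open>0 < \<delta>\<close> by auto
qed

lemma has_real_derivative_le_imp_decrease:
  fixes g :: "real \<Rightarrow> real"
  assumes "a \<le> b" "continuous_on {a..b} g"
    and "\<And>t. a < t \<Longrightarrow> t < b \<Longrightarrow> (g has_real_derivative g' t) (at t)"
    and "\<And>t. a < t \<Longrightarrow> t < b \<Longrightarrow> g' t \<le> - m"
  shows "g b \<le> g a - m * (b - a)"
proof (cases "a = b")
  case False
  then have "a < b" using \<open>a \<le> b\<close> by simp
  then obtain \<xi> where "a < \<xi>" "\<xi> < b" "g b - g a = g' \<xi> * (b - a)"
    using mvt[OF _ assms(2), of "\<lambda>t h. g' t * h"] assms(3) by (auto simp: has_field_derivative_def)
  moreover have "g' \<xi> * (b - a) \<le> - m * (b - a)"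
    using assms(4)[OF \<open>a < \<xi>\<close> \<open>\<xi> < b\<close>] \<open>a < b\<close> by (intro mult_right_mono) auto
  ultimately show ?thesis by simp
qed simp

lemma continuous_on_stays_below:
  fixes \<phi> :: "real \<Rightarrow> real"
  assumes cont: "continuous_on {0..} \<phi>" and "\<phi> 0 < a"
    and step: "\<And>t. 0 \<le> t \<Longrightarrow> \<forall>s\<in>{0..t}. \<phi> s \<le> a \<Longrightarrow> \<phi> t < a"
    and "0 \<le> t"
  shows "\<phi> t < a"
proof (rule ccontr)
  define S where "S = {0..} \<inter> \<phi> -` {a..}"
  assume "\<not> \<phi> t < a"
  then have "S \<noteq> {}" using \<open>0 \<le> t\<close> by (auto simp: S_def)
  moreover have "bdd_below S" by (rule bdd_belowI[of _ 0]) (auto simp: S_def)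
  moreover have "closed S" unfolding S_def by (rule continuous_closed_preimage[OF cont]) auto
  ultimately have "Inf S \<in> S" by (rule closed_contains_Inf)
  have before: "\<phi> s < a" if "0 \<le> s" "s < Inf S" for s
    using cInf_lower[OF _ \<open>bdd_below S\<close>, of s] that by (force simp: S_def)
  have "0 < Inf S"
    using \<open>Inf S \<in> S\<close> \<open>\<phi> 0 < a\<close> by (auto simp: S_def order.order_iff_strict)
  have "\<phi> (Inf S) \<le> a"
  proof (rule continuous_le_on_closure[where S="{0..<Inf S}" and f=\<phi> and x="Inf S"])
    show "continuous_on (closure {0..<Inf S}) \<phi>"
      using closure_atLeastLessThan[OF \<open>0 < Inf S\<close>] continuous_on_subset[OF cont] by auto
  qed (use closure_atLeastLessThan[OF \<open>0 < Inf S\<close>] \<open>0 < Inf S\<close> before in \<open>auto intro: less_imp_le\<close>)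
  then have "\<forall>s\<in>{0..Inf S}. \<phi> s \<le> a"
    using before by (metis atLeastAtMost_iff less_eq_real_def order_less_imp_le)
  then show False
    using step[of "Inf S"] \<open>Inf S \<in> S\<close> by (auto simp: S_def)
qed

lemma compact_superlevel_set:
  fixes V :: "'a::t2_space \<Rightarrow> real"
  assumes "compact N" "continuous_on N V"
  shows "compact {x\<in>N. \<eta> \<le> V x}"
proof -
  have "closed (N \<inter> V -` {\<eta>..})"
    using continuous_closed_preimage[OF assms(2) compact_imp_closed[OF assms(1)] closed_atLeast] .
  moreover have "{x\<in>N. \<eta> \<le> V x} = N \<inter> (N \<inter> V -` {\<eta>..})" by auto
  ultimately show ?thesis using compact_Int_closed[OF assms(1)] by metis
qed

lemma lyapunov_tendsto_zero:
  fixes y :: "real \<Rightarrow> 'a::t2_space" and V h :: "'a \<Rightarrow> real"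
  assumes "compact N" "continuous_on N V" "continuous_on N h"
    and V_nonneg: "\<And>x. x \<in> N \<Longrightarrow> 0 \<le> V x"
    and h_nonneg: "\<And>x. x \<in> N \<Longrightarrow> 0 \<le> h x" and h_pos: "\<And>x. x \<in> N \<Longrightarrow> 0 < V x \<Longrightarrow> 0 < h x"
    and y: "\<And>t. 0 \<le> t \<Longrightarrow> y t \<in> N"
    and cont: "continuous_on {0..} (\<lambda>t. V (y t))"
    and deriv: "\<And>t. 0 < t \<Longrightarrow> ((\<lambda>t. V (y t)) has_real_derivative - h (y t)) (at t)"
  shows "((\<lambda>t. V (y t)) \<longlongrightarrow> 0) at_top"
proof -
  have decrease: "V (y b) \<le> V (y a) - m * (b - a)"
    if "0 \<le> a" "a \<le> b" "\<And>t. a < t \<Longrightarrow> t < b \<Longrightarrow> m \<le> h (y t)" for a b m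
    using that continuous_on_subset[OF cont]
    by (intro has_real_derivative_le_imp_decrease[OF \<open>a \<le> b\<close> _ deriv]) auto
  have eventually_below: "\<exists>T\<ge>0. V (y T) < \<eta>" if "0 < \<eta>" for \<eta>
  proof (rule ccontr)
    assume "\<not> ?thesis"
    then have yQ: "y t \<in> {x\<in>N. \<eta> \<le> V x}" if "0 \<le> t" for t
      using y that by force
    obtain m where "0 < m" and m: "\<And>x. x \<in> {x\<in>N. \<eta> \<le> V x} \<Longrightarrow> m \<le> h x"
      by (rule compact_continuous_pos_lower_bound[of "{x\<in>N. \<eta> \<le> V x}" h])
         (use compact_superlevel_set[OF assms(1,2)] continuous_on_subset[OF assms(3)] h_pos
            \<open>0 < \<eta>\<close> in auto)
    define T where "T = (V (y 0) + 1) / m"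
    have "0 \<le> T" using \<open>0 < m\<close> V_nonneg[OF y[of 0]] by (simp add: T_def)
    then have "V (y T) \<le> V (y 0) - m * (T - 0)"
      using yQ m by (intro decrease) auto
    also have "\<dots> < 0" using \<open>0 < m\<close> by (simp add: T_def)
    finally show False using V_nonneg[OF y[OF \<open>0 \<le> T\<close>]] by simp
  qed
  show ?thesis
  proof (rule tendstoI)
    fix e :: real assume "0 < e"
    then obtain T where "0 \<le> T" "V (y T) < e" using eventually_below by blast
    then have "\<forall>t\<ge>T. dist (V (y t)) 0 < e"
      using decrease[of T _ 0] h_nonneg y V_nonneg by (force simp: dist_real_def)
    then show "\<forall>\<^sub>F t in at_top. dist (V (y t)) 0 < e"
      by (auto simp: eventually_at_top_linorder)
  qed
qed

lemma tendsto_infdist_zero_if_tendsto_zero: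
  fixes y :: "real \<Rightarrow> 'a::metric_space" and V :: "'a \<Rightarrow> real"
  assumes "compact N" "continuous_on N V" "\<And>x. x \<in> N \<Longrightarrow> x \<notin> Z \<Longrightarrow> 0 < V x"
    and y: "\<And>t. 0 \<le> t \<Longrightarrow> y t \<in> N" and lim: "((\<lambda>t. V (y t)) \<longlongrightarrow> 0) at_top"
  shows "((\<lambda>t. infdist (y t) Z) \<longlongrightarrow> 0) at_top"
proof (rule tendstoI)
  fix e :: real assume "0 < e"
  define Q where "Q = {x\<in>N. e \<le> infdist x Z}"
  have "compact Q"
    unfolding Q_def by (intro compact_superlevel_set assms(1) continuous_intros)
  moreover have "0 < V x" if "x \<in> Q" for x
    using that assms(3) \<open>0 < e\<close> by (force simp: Q_def infdist_zero)
  moreover have "continuous_on Q V"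
    using assms(2) by (rule continuous_on_subset) (auto simp: Q_def)
  ultimately obtain \<eta> where "0 < \<eta>" and \<eta>: "\<And>x. x \<in> Q \<Longrightarrow> \<eta> \<le> V x"
    using compact_continuous_pos_lower_bound by blast
  have "\<forall>\<^sub>F t in at_top. V (y t) < \<eta> \<and> 0 \<le> t"
    using order_tendstoD(2)[OF lim \<open>0 < \<eta>\<close>] eventually_ge_at_top by (rule eventually_conj)
  then show "\<forall>\<^sub>F t in at_top. dist (infdist (y t) Z) 0 < e"
  proof eventually_elim
    case (elim t)
    then have "y t \<notin> Q" using \<eta> by force
    then show ?case using y[of t] elim by (simp add: Q_def infdist_nonneg)
  qed
qed

section \<open>The gradient-like system\<close>

text \<open>Surjectivity is an open condition.\<close>
lemma surj_blinfun_near_compact: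
  fixes A :: "'a::heine_borel \<Rightarrow> 'b::real_normed_vector \<Rightarrow>\<^sub>L 'c::euclidean_space"
  assumes "compact Z" "compact N" "continuous_on N A" "\<And>z. z \<in> Z \<Longrightarrow> surj (A z)"
  obtains \<delta> where "0 < \<delta>"
    "\<And>x z v. x \<in> N \<Longrightarrow> z \<in> Z \<Longrightarrow> dist x z < \<delta> \<Longrightarrow> v \<noteq> 0 \<Longrightarrow> \<exists>h. A x h \<bullet> v \<noteq> 0"
proof -
  define S where "S = sphere (0::'c) 1"
  define B where "B = (\<Inter>h. {p \<in> N \<times> S. A (fst p) h \<bullet> snd p = 0})"
  have "closed B"
    unfolding B_def S_def
    by (intro closed_INT ballI continuous_closed_preimage_constant closed_Times
        compact_imp_closed[OF assms(2)] continuous_intros continuous_on_compose2[OF assms(3)]) auto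
  moreover have "compact (Z \<times> S)"
    unfolding S_def by (intro compact_Times assms(1) compact_sphere)
  moreover have "(Z \<times> S) \<inter> B = {}"
  proof -
    have "\<exists>h. A z h \<bullet> v \<noteq> 0" if "z \<in> Z" "v \<in> S" for z v
    proof -
      obtain h where "A z h = v" using assms(4)[OF \<open>z \<in> Z\<close>] by (metis surjD)
      then have "A z h \<bullet> v = 1" using \<open>v \<in> S\<close> by (simp add: S_def dot_square_norm)
      then show ?thesis by (metis zero_neq_one)
    qed
    then show ?thesis by (fastforce simp: B_def)
  qed
  ultimately obtain \<delta> where "0 < \<delta>" and \<delta>: "\<forall>p\<in>Z \<times> S. \<forall>q\<in>B. \<delta> \<le> dist p q"
    using separate_compact_closed by metis
  have "\<exists>h. A x h \<bullet> v \<noteq> 0"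
    if "x \<in> N" "z \<in> Z" "dist x z < \<delta>" "v \<noteq> 0" for x z v
  proof (rule ccontr)
    assume "\<nexists>h. A x h \<bullet> v \<noteq> 0"
    then have "(x, v /\<^sub>R norm v) \<in> B" using that by (auto simp: B_def S_def)
    moreover have "(z, v /\<^sub>R norm v) \<in> Z \<times> S" using that by (simp add: S_def)
    ultimately have "\<delta> \<le> dist (z, v /\<^sub>R norm v) (x, v /\<^sub>R norm v)" using \<delta> by blast
    then show False using \<open>dist x z < \<delta>\<close> by (simp add: dist_Pair_Pair dist_commute)
  qed
  with \<open>0 < \<delta>\<close> show ?thesis using that by blast
qed

lemma inner_matrix_vector_mult_sym:
  fixes K :: "real^'m^'m"
  assumes "transpose K = K"
  shows "u \<bullet> (K *v v) = v \<bullet> (K *v u)"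
  by (metis assms dot_lmul_matrix inner_commute transpose_matrix_vector)

lemma has_vector_derivative_atLeastD:
  assumes "\<And>t. a \<le> t \<Longrightarrow> (y has_vector_derivative y' t) (at t within {a..})"
  shows "continuous_on {a..} y" "\<And>t. a < t \<Longrightarrow> (y has_vector_derivative y' t) (at t)"
proof -
  show "continuous_on {a..} y"
    unfolding continuous_on_eq_continuous_within
    using has_vector_derivative_continuous[OF assms] by auto
  show "(y has_vector_derivative y' t) (at t)" if "a < t" for t
    using assms[of t] that at_within_interior[of t "{a..}"] by (simp add: interior_real_atLeast)
qed

locale gradient_flow =
  fixes U :: "(real^'n) set" and X :: "real^'n \<Rightarrow> real^'n"
    and f :: "real^'n \<Rightarrow> real^'m" and f' :: "real^'n \<Rightarrow> (real^'n) \<Rightarrow>\<^sub>L (real^'m)"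
    and x0 :: "real^'n" and K :: "real^'m^'m" and V :: "real^'n \<Rightarrow> real"
  assumes open_U: "open U" and C1_X: "C1_on U X"
    and f_deriv: "\<And>x. x \<in> U \<Longrightarrow> (f has_derivative blinfun_apply (f' x)) (at x)"
    and C1_f': "C1_on U f'"
    and x0_in_U: "x0 \<in> U"
    and sym_pos_K: "sym_pos_def K"
    and V_def: "\<And>x. V x = 1/2 * ((f x - f x0) \<bullet> (K *v (f x - f x0)))"
    and grad_V_orth_X: "\<And>x. x \<in> U \<Longrightarrow> grad V x \<bullet> X x = 0"
    and compact_zeros: "compact {x\<in>U. V x = 0}"
    and surj_f': "\<And>x. x \<in> U \<Longrightarrow> V x = 0 \<Longrightarrow> surj (f' x)"
begin

abbreviation Z :: "(real^'n) set" where "Z \<equiv> {x\<in>U. V x = 0}"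

abbreviation F :: "real^'n \<Rightarrow> real^'n" where "F x \<equiv> X x - grad V x"

definition w :: "real^'n \<Rightarrow> real^'m" where "w x = K *v (f x - f x0)"

lemma V_eq: "V x = 1/2 * ((f x - f x0) \<bullet> w x)"
  by (simp add: V_def w_def)

lemma V_nonneg: "0 \<le> V x"
  using sym_pos_K by (cases "f x = f x0") (auto simp: V_def sym_pos_def_def less_imp_le)

lemma zeros_nonempty: "Z \<noteq> {}"
  using x0_in_U by (auto simp: V_def)

lemma continuous_on_f': "continuous_on U f'"
  using C1_f' open_U by (rule C1_on_imp_continuous_on)

lemma C1_f: "C1_on U f"
  using f_deriv continuous_on_f' by (auto simp: C1_on_def)

lemma continuous_on_w: "continuous_on U w"
  unfolding w_def using C1_on_imp_continuous_on[OF C1_f open_U]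
  by (intro linear_continuous_on_compose[OF _ matrix_vector_mul_linear] continuous_intros)

lemma has_derivative_V:
  assumes "x \<in> U"
  shows "(V has_derivative (\<lambda>h. f' x h \<bullet> w x)) (at x)"
proof -
  have dev: "((\<lambda>x. f x - f x0) has_derivative f' x) (at x)"
    using has_derivative_diff[OF f_deriv[OF assms] has_derivative_const] by simp
  have "bounded_linear ((*v) K)"
    by (simp add: linear_conv_bounded_linear matrix_vector_mul_linear)
  from has_derivative_inner[OF dev bounded_linear.has_derivative[OF this dev]]
  have "(V has_derivative (\<lambda>h. 1/2 * ((f x - f x0) \<bullet> (K *v f' x h) + f' x h \<bullet> w x))) (at x)"
    unfolding V_def[abs_def] w_def by (rule has_derivative_mult_right)
  moreover have "(f x - f x0) \<bullet> (K *v f' x h) = f' x h \<bullet> w x" for h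
    using sym_pos_K by (simp add: w_def sym_pos_def_def inner_matrix_vector_mult_sym)
  ultimately show ?thesis by simp
qed

lemma grad_V_component:
  assumes "x \<in> U"
  shows "grad V x $ i = f' x (axis i 1) \<bullet> w x"
  using frechet_derivative_at[OF has_derivative_V[OF assms], symmetric] by (simp add: grad_def)

lemma inner_grad_V:
  assumes "x \<in> U"
  shows "h \<bullet> grad V x = f' x h \<bullet> w x"
proof -
  have "h \<bullet> grad V x = (\<Sum>i\<in>UNIV. h $ i * (f' x (axis i 1) \<bullet> w x))"
    by (simp add: inner_vec_def grad_V_component[OF assms])
  also have "\<dots> = f' x (\<Sum>i\<in>UNIV. h $ i *\<^sub>R axis i 1) \<bullet> w x"
    by (simp add: inner_sum_left blinfun.sum_right blinfun.scaleR_right)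
  also have "(\<Sum>i\<in>UNIV. h $ i *\<^sub>R axis i 1) = h"
    using basis_expansion[of h] by (simp add: scalar_mult_eq_scaleR)
  finally show ?thesis .
qed

lemma continuous_on_grad_V: "continuous_on U (grad V)"
proof (rule continuous_on_eq)
  show "continuous_on U (\<lambda>x. \<chi> i. f' x (axis i 1) \<bullet> w x)"
    using continuous_on_f' continuous_on_w by (intro continuous_intros)
  show "(\<chi> i. f' x (axis i 1) \<bullet> w x) = grad V x" if "x \<in> U" for x
    using vec_lambda_eta[of "grad V x"] grad_V_component[OF that] by simp
qed

lemma continuous_on_V: "continuous_on U V"
  using has_derivative_V by (intro continuous_at_imp_continuous_on) (auto intro: has_derivative_continuous)

lemma V_along_flow_has_derivative:
  assumes "(y has_vector_derivative F (y t)) (at t)" "y t \<in> U"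
  shows "((\<lambda>t. V (y t)) has_real_derivative - (norm (grad V (y t)))\<^sup>2) (at t)"
proof -
  have "F (y t) \<bullet> grad V (y t) = - (norm (grad V (y t)))\<^sup>2"
    using grad_V_orth_X[OF assms(2)]
    by (simp only: inner_diff_left inner_commute[of "X (y t)"] power2_norm_eq_inner)
  then have chain_rule: "f' (y t) (s *\<^sub>R F (y t)) \<bullet> w (y t) = s * - (norm (grad V (y t)))\<^sup>2" for s
    using inner_grad_V[OF assms(2), of "s *\<^sub>R F (y t)"] by simp
  have "((\<lambda>t. V (y t)) has_derivative (\<lambda>s. f' (y t) (s *\<^sub>R F (y t)) \<bullet> w (y t))) (at t)"
    using diff_chain_at[OF assms(1)[unfolded has_vector_derivative_def] has_derivative_V[OF assms(2)]]
    by (simp add: o_def)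
  then show ?thesis
    unfolding has_field_derivative_def
    by (rule has_derivative_eq_rhs) (simp add: fun_eq_iff chain_rule mult.commute)
qed

lemma V_along_flow_decreasing:
  assumes "a \<le> b" "continuous_on {a..b} y" "\<And>s. s \<in> {a..b} \<Longrightarrow> y s \<in> U"
    and "\<And>s. a < s \<Longrightarrow> s < b \<Longrightarrow> (y has_vector_derivative F (y s)) (at s)"
  shows "V (y b) \<le> V (y a)"
proof -
  have "V (y b) \<le> V (y a) - 0 * (b - a)"
  proof (rule has_real_derivative_le_imp_decrease[OF \<open>a \<le> b\<close>,
        where g'="\<lambda>t. - (norm (grad V (y t)))\<^sup>2"])
    show "continuous_on {a..b} (\<lambda>t. V (y t))"
      using continuous_on_compose2[OF continuous_on_V assms(2) image_subsetI[OF assms(3)]] .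
    show "((\<lambda>t. V (y t)) has_real_derivative - (norm (grad V (y t)))\<^sup>2) (at t)"
      if "a < t" "t < b" for t
      using that by (intro V_along_flow_has_derivative assms(3,4)) auto
  qed simp
  then show ?thesis by simp
qed

lemma lipschitz_on_F_cball:
  assumes "x \<in> U"
  obtains u L where "0 < u" "L-lipschitz_on (cball x u) F"
proof -
  obtain u where "0 < u" "cball x u \<subseteq> U" using open_U assms open_contains_cball by blast
  define C where "C = cball x u"
  have C: "compact C" "convex C" "C \<subseteq> U" using \<open>cball x u \<subseteq> U\<close> by (auto simp: C_def)
  obtain LX where LX: "LX-lipschitz_on C X"
    using C1_on_lipschitz_on_compact_convex[OF C1_X C] .
  obtain Lf where "Lf-lipschitz_on C f"
    using C1_on_lipschitz_on_compact_convex[OF C1_f C] .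
  then have "(Lf + 0)-lipschitz_on C (\<lambda>y. f y - f x0)"
    by (intro lipschitz_on_diff lipschitz_on_constant)
  moreover obtain BK where "BK-lipschitz_on ((\<lambda>y. f y - f x0) ` C) ((*v) K)"
    using bounded_linear.lipschitz_boundE[OF matrix_vector_mul_bounded_linear] .
  ultimately have Lw: "(BK * (Lf + 0))-lipschitz_on C w"
    unfolding w_def by (rule lipschitz_on_compose2)
  obtain Lf' where Lf': "Lf'-lipschitz_on C f'"
    using C1_on_lipschitz_on_compact_convex[OF C1_f' C] .
  obtain Mf' where "0 \<le> Mf'" "\<And>y. y \<in> C \<Longrightarrow> norm (f' y) \<le> Mf'"
    using continuous_on_compact_bound[OF C(1) continuous_on_subset[OF continuous_on_f' C(3)]] by blast
  then have Mf': "norm (f' y (axis i 1)) \<le> Mf'" if "y \<in> C" for y i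
    using norm_blinfun[of "f' y" "axis i 1"] that by (simp add: order_trans)
  obtain Mw where "0 \<le> Mw" and Mw: "\<And>y. y \<in> C \<Longrightarrow> norm (w y) \<le> Mw"
    using continuous_on_compact_bound[OF C(1) continuous_on_subset[OF continuous_on_w C(3)]] by blast
  define Li where "Li = Lf' * Mw + Mf' * (BK * (Lf + 0))"
  have "Li-lipschitz_on C (\<lambda>y. grad V y $ i)" for i
  proof -
    have "Li-lipschitz_on C (\<lambda>y. f' y (axis i 1) \<bullet> w y)"
      using lipschitz_on_inner[OF lipschitz_on_blinfun_apply[OF Lf', of "axis i 1"] Lw Mf' Mw
          \<open>0 \<le> Mf'\<close> \<open>0 \<le> Mw\<close>]
      by (simp add: Li_def)
    then show ?thesis
      by (rule lipschitz_on_transform) (use C(3) grad_V_component in auto)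
  qed
  then have "(LX + CARD('n) * Li)-lipschitz_on C F"
    by (intro lipschitz_on_diff LX lipschitz_on_vec_lambda)
  with \<open>0 < u\<close> show ?thesis using that by (auto simp: C_def)
qed

lemma lipschitz_on_F_compact:
  assumes "compact S" "S \<subseteq> U"
  obtains L where "L-lipschitz_on S F"
proof -
  have "local_lipschitz {0::real} U (\<lambda>_. F)"
  proof (rule local_lipschitzI)
    fix x assume "x \<in> U"
    then obtain u L where "0 < u" "L-lipschitz_on (cball x u) F"
      by (rule lipschitz_on_F_cball)
    then show "\<exists>u>0. \<exists>L. \<forall>t\<in>cball t u \<inter> {0}. L-lipschitz_on (cball x u \<inter> U) F" for t :: real
      by (auto intro: lipschitz_on_subset)
  qed
  then have "local_lipschitz {0::real} S (\<lambda>_. F)"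
    using local_lipschitz_subset[OF _ subset_refl assms(2)] by blast
  then obtain L where "L-lipschitz_on S F"
    by (rule local_lipschitz_compact_implies_lipschitz) (use assms(1) in auto)
  then show ?thesis ..
qed

lemma grad_V_nonzero_near_zeros:
  obtains \<delta> where "0 < \<delta>" "\<And>x. x \<in> U \<Longrightarrow> infdist x Z < \<delta> \<Longrightarrow> 0 < V x \<Longrightarrow> grad V x \<noteq> 0"
proof -
  obtain r0 where "0 < r0" and r0: "{x. infdist x Z \<le> r0} \<subseteq> U"
    using infdist_le_subset_open[OF compact_zeros zeros_nonempty _ open_U] by blast
  define N where "N = {x. infdist x Z \<le> r0}"
  have "compact N"
    unfolding N_def using compact_infdist_le[OF zeros_nonempty compact_zeros \<open>0 < r0\<close>] .
  moreover have "continuous_on N f'"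
    using continuous_on_subset[OF continuous_on_f' r0] by (simp add: N_def)
  moreover have "\<And>z. z \<in> Z \<Longrightarrow> surj (f' z)"
    using surj_f' by blast
  ultimately obtain \<delta> where "0 < \<delta>" and \<delta>:
      "\<And>x z v. x \<in> N \<Longrightarrow> z \<in> Z \<Longrightarrow> dist x z < \<delta> \<Longrightarrow> v \<noteq> 0 \<Longrightarrow> \<exists>h. f' x h \<bullet> v \<noteq> 0"
    using surj_blinfun_near_compact[OF compact_zeros] by blast
  have "grad V x \<noteq> 0" if "x \<in> U" "infdist x Z < min r0 \<delta>" "0 < V x" for x
  proof
    assume "grad V x = 0"
    then have "\<forall>h. f' x h \<bullet> w x = 0"
      using inner_grad_V[OF \<open>x \<in> U\<close>] by simp
    moreover obtain z where "z \<in> Z" "infdist x Z = dist x z"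
      using infdist_attains_inf[OF compact_imp_closed[OF compact_zeros] zeros_nonempty] by blast
    moreover have "x \<in> N" using that(2) by (simp add: N_def)
    ultimately have "w x = 0"
      using \<delta>[of x z "w x"] that(2) by force
    then show False using \<open>0 < V x\<close> by (simp add: V_eq)
  qed
  then show ?thesis using that[of "min r0 \<delta>"] \<open>0 < r0\<close> \<open>0 < \<delta>\<close> by auto
qed

definition trapping :: "real \<Rightarrow> real \<Rightarrow> bool" where
  "trapping r c \<longleftrightarrow> 0 < r \<and> 0 < c \<and> {x. infdist x Z \<le> r} \<subseteq> U
     \<and> (\<forall>x. infdist x Z \<le> r \<longrightarrow> 0 < V x \<longrightarrow> grad V x \<noteq> 0)
     \<and> (\<forall>x. infdist x Z \<le> r \<longrightarrow> V x \<le> c \<longrightarrow> infdist x Z < r/2)"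

lemma trappingD:
  assumes "trapping r c"
  shows "0 < r" "0 < c" "infdist x Z \<le> r \<Longrightarrow> x \<in> U"
    "infdist x Z \<le> r \<Longrightarrow> 0 < V x \<Longrightarrow> grad V x \<noteq> 0"
    "infdist x Z \<le> r \<Longrightarrow> V x \<le> c \<Longrightarrow> infdist x Z < r/2"
  using assms by (auto simp: trapping_def)

lemma trapping_neighbourhood_subset:
  assumes "trapping r c"
  shows "{x. infdist x Z \<le> r} \<subseteq> U"
  using assms by (simp add: trapping_def)

lemma trapping_exists:
  obtains r c where "trapping r c"
proof -
  obtain r0 where "0 < r0" and r0: "{x. infdist x Z \<le> r0} \<subseteq> U"
    using infdist_le_subset_open[OF compact_zeros zeros_nonempty _ open_U] by blast
  obtain \<delta> where "0 < \<delta>" and \<delta>: "\<And>x. x \<in> U \<Longrightarrow> infdist x Z < \<delta> \<Longrightarrow> 0 < V x \<Longrightarrow> grad V x \<noteq> 0"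
    using grad_V_nonzero_near_zeros by blast
  define r where "r = min r0 \<delta> / 2"
  have "0 < r" using \<open>0 < r0\<close> \<open>0 < \<delta>\<close> by (simp add: r_def)
  have "infdist x Z \<le> r0" "infdist x Z < \<delta>" if "infdist x Z \<le> r" for x
    using that infdist_nonneg[of x Z] \<open>0 < r0\<close> \<open>0 < \<delta>\<close> by (auto simp: r_def)
  then have N_U: "{x. infdist x Z \<le> r} \<subseteq> U" using r0 by blast
  define shell where "shell = {x\<in>{x. infdist x Z \<le> r}. r/2 \<le> infdist x Z}"
  have "compact shell"
    unfolding shell_def using compact_infdist_le[OF zeros_nonempty compact_zeros \<open>0 < r\<close>]
    by (intro compact_superlevel_set continuous_intros)
  moreover have "continuous_on shell V"
    by (rule continuous_on_subset[OF continuous_on_V]) (use N_U in \<open>auto simp: shell_def\<close>)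
  moreover have "0 < V x" if "x \<in> shell" for x
  proof -
    have "x \<in> U" "x \<notin> Z" using that N_U \<open>0 < r\<close> by (auto simp: shell_def)
    then show ?thesis using V_nonneg[of x] by (simp add: less_le)
  qed
  ultimately obtain c0 where "0 < c0" and c0: "\<And>x. x \<in> shell \<Longrightarrow> c0 \<le> V x"
    using compact_continuous_pos_lower_bound by blast
  have "trapping r (c0/2)"
    unfolding trapping_def
  proof (intro conjI allI impI)
    fix x assume "infdist x Z \<le> r"
    then show "0 < V x \<Longrightarrow> grad V x \<noteq> 0"
      using \<delta> N_U \<open>\<And>x. infdist x Z \<le> r \<Longrightarrow> infdist x Z < \<delta>\<close> by blast
    show "V x \<le> c0/2 \<Longrightarrow> infdist x Z < r/2"
      using c0[of x] \<open>infdist x Z \<le> r\<close> \<open>0 < c0\<close> by (force simp: shell_def)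
  qed (use \<open>0 < r\<close> \<open>0 < c0\<close> N_U in auto)
  then show ?thesis ..
qed

lemma trapping_solution_converges:
  assumes trap: "trapping r c" and sol: "is_solution F {x. infdist x Z < r} {0..} y"
    and "V (y 0) \<le> c"
  shows "\<forall>t\<ge>0. V (y t) \<le> c" "((\<lambda>t. infdist (y t) Z) \<longlongrightarrow> 0) at_top"
proof -
  have y_near: "infdist (y t) Z < r" if "0 \<le> t" for t
    using sol that by (simp add: is_solution_def)
  then have yU: "y t \<in> U" if "0 \<le> t" for t
    using trappingD(3)[OF trap] that less_imp_le by blast
  have cont: "continuous_on {0..} y"
    and deriv: "\<And>t. 0 < t \<Longrightarrow> (y has_vector_derivative F (y t)) (at t)"
    using has_vector_derivative_atLeastD[of 0 y "\<lambda>t. F (y t)"] sol by (auto simp: is_solution_def)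
  have "V (y t) \<le> V (y 0)" if "0 \<le> t" for t
  proof (rule V_along_flow_decreasing[OF that])
    show "continuous_on {0..t} y" using cont by (rule continuous_on_subset) auto
  qed (use yU deriv in auto)
  then show below_c: "\<forall>t\<ge>0. V (y t) \<le> c" using \<open>V (y 0) \<le> c\<close> by force
  define N where "N = {x. infdist x Z \<le> r/2}"
  have "compact N"
    using compact_infdist_le[OF zeros_nonempty compact_zeros, of "r/2"] trappingD(1)[OF trap]
    by (simp add: N_def)
  have "N \<subseteq> U"
  proof
    fix x assume "x \<in> N"
    then have "infdist x Z \<le> r" using trappingD(1)[OF trap] by (simp add: N_def)
    then show "x \<in> U" by (rule trappingD(3)[OF trap])
  qed
  have yN: "y t \<in> N" if "0 \<le> t" for t
    using trappingD(5)[OF trap] y_near[OF that] below_c that by (simp add: N_def less_imp_le)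
  have "((\<lambda>t. V (y t)) \<longlongrightarrow> 0) at_top"
  proof (rule lyapunov_tendsto_zero[OF \<open>compact N\<close>, where h="\<lambda>x. (norm (grad V x))\<^sup>2"])
    show "continuous_on N V"
      by (rule continuous_on_subset[OF continuous_on_V \<open>N \<subseteq> U\<close>])
    show "continuous_on N (\<lambda>x. (norm (grad V x))\<^sup>2)"
      by (intro continuous_intros continuous_on_subset[OF continuous_on_grad_V \<open>N \<subseteq> U\<close>])
    show "0 < (norm (grad V x))\<^sup>2" if "x \<in> N" "0 < V x" for x
      using that trappingD(1,4)[OF trap] by (simp add: N_def)
    show "continuous_on {0..} (\<lambda>t. V (y t))"
      using continuous_on_compose2[OF continuous_on_V cont] yU by auto
    show "((\<lambda>t. V (y t)) has_real_derivative - (norm (grad V (y t)))\<^sup>2) (at t)" if "0 < t" for t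
      using V_along_flow_has_derivative[OF deriv[OF that] yU] that by simp
  qed (simp_all add: V_nonneg yN)
  moreover have "0 < V x" if "x \<in> N" "x \<notin> Z" for x
    using that \<open>N \<subseteq> U\<close> V_nonneg[of x] by (auto simp: less_le)
  ultimately show "((\<lambda>t. infdist (y t) Z) \<longlongrightarrow> 0) at_top"
    using tendsto_infdist_zero_if_tendsto_zero[OF \<open>compact N\<close>
        continuous_on_subset[OF continuous_on_V \<open>N \<subseteq> U\<close>]] yN by blast
qed

lemma continuous_on_F: "continuous_on U F"
  using continuous_on_diff[OF C1_on_imp_continuous_on[OF C1_X open_U] continuous_on_grad_V] .

lemma cutoff_field_near_zeros:
  assumes "0 < r" "{x. infdist x Z \<le> r} \<subseteq> U"
  obtains L G M where "L-lipschitz_on UNIV G" "\<And>x. norm (G x) \<le> M"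
    "\<And>x. infdist x Z \<le> r/2 \<Longrightarrow> G x = F x"
proof -
  define N where "N = {x. infdist x Z \<le> r}"
  have "compact N"
    using compact_infdist_le[OF zeros_nonempty compact_zeros \<open>0 < r\<close>] by (simp add: N_def)
  obtain LF where "LF-lipschitz_on N F"
    using lipschitz_on_F_compact[OF \<open>compact N\<close>] assms(2) by (auto simp: N_def)
  then have LF: "LF-lipschitz_on {x. infdist x Z \<le> r} F"
    by (simp only: N_def)
  obtain M where "0 \<le> M" and "\<And>x. x \<in> N \<Longrightarrow> norm (F x) \<le> M"
    using continuous_on_compact_bound[OF \<open>compact N\<close> continuous_on_subset[OF continuous_on_F]]
      assms(2) by (auto simp: N_def)
  show ?thesis
  proof (rule lipschitz_extension_near_set[OF LF _ \<open>0 < r\<close> \<open>0 \<le> M\<close>])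
    show "norm (F x) \<le> M" if "infdist x Z \<le> r" for x
      using \<open>\<And>x. x \<in> N \<Longrightarrow> norm (F x) \<le> M\<close> that by (simp add: N_def)
  qed (rule that)
qed

text \<open>As long as the solution of the cut-off system stays within distance \<open>r/2\<close> of \<open>Z\<close> it
  solves the original one, so \<open>V\<close> does not increase along it, and the choice of \<open>c\<close> then keeps it
  strictly inside that neighbourhood.\<close>
lemma trapping_solution_exists:
  assumes trap: "trapping r c" and "infdist p Z < r" "V p \<le> c"
  obtains y where "y 0 = p" "is_solution F {x. infdist x Z < r} {0..} y"
proof -
  obtain LG G M where LG: "LG-lipschitz_on UNIV G" and G_bound: "\<And>x. norm (G x) \<le> M"
    and G_eq_F: "\<And>x. infdist x Z \<le> r/2 \<Longrightarrow> G x = F x"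
    by (rule cutoff_field_near_zeros[OF trappingD(1) trapping_neighbourhood_subset, OF trap trap])
      blast
  obtain y where "y 0 = p"
    and y_deriv: "\<And>t. 0 \<le> t \<Longrightarrow> (y has_vector_derivative G (y t)) (at t within {0..})"
    by (rule bounded_lipschitz_ode_solution_exists[OF LG G_bound]) blast
  note y_cont = has_vector_derivative_atLeastD(1)[OF y_deriv]
    and y_deriv_at = has_vector_derivative_atLeastD(2)[OF y_deriv]
  have near: "infdist (y t) Z < r/2" if "0 \<le> t" for t
  proof (rule continuous_on_stays_below[OF _ _ _ that])
    show "continuous_on {0..} (\<lambda>t. infdist (y t) Z)"
      by (intro continuous_intros y_cont)
    show "infdist (y 0) Z < r/2"
      using trappingD(5)[OF trap] \<open>infdist p Z < r\<close> \<open>V p \<le> c\<close> \<open>y 0 = p\<close> by simp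
    fix t assume "0 \<le> t" and before: "\<forall>s\<in>{0..t}. infdist (y s) Z \<le> r/2"
    have near_r: "infdist (y s) Z \<le> r" if "s \<in> {0..t}" for s
      using before that trappingD(1)[OF trap] by fastforce
    have "V (y t) \<le> V (y 0)"
    proof (rule V_along_flow_decreasing[OF \<open>0 \<le> t\<close>])
      show "continuous_on {0..t} y" using y_cont by (rule continuous_on_subset) auto
      show "y s \<in> U" if "s \<in> {0..t}" for s
        using trappingD(3)[OF trap near_r[OF that]] .
      show "(y has_vector_derivative F (y s)) (at s)" if "0 < s" "s < t" for s
        using y_deriv_at[of s] G_eq_F[of "y s"] before that by simp
    qed
    then show "infdist (y t) Z < r/2"
      using trappingD(5)[OF trap near_r[of t]] \<open>0 \<le> t\<close> \<open>y 0 = p\<close> \<open>V p \<le> c\<close> by simp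
  qed
  have "is_solution F {x. infdist x Z < r} {0..} y"
    unfolding is_solution_def
  proof
    fix t :: real assume "t \<in> {0..}"
    then show "y t \<in> {x. infdist x Z < r} \<and> (y has_vector_derivative F (y t)) (at t within {0..})"
      using near[of t] y_deriv[of t] G_eq_F[of "y t"] trappingD(1)[OF trap] by simp
  qed
  with \<open>y 0 = p\<close> show ?thesis ..
qed

lemma attracting_sublevel_neighbourhood:
  "\<exists>c>0. \<exists>W. open W \<and> W \<subseteq> U \<and> Z \<subseteq> W \<and>
    (\<forall>p\<in>{x\<in>W. 0 \<le> V x \<and> V x \<le> c}.
       (\<exists>y. y 0 = p \<and> is_solution F W {0..} y) \<and>
       (\<forall>y. y 0 = p \<and> is_solution F W {0..} y \<longrightarrow>
          (\<forall>t\<ge>0. 0 \<le> V (y t) \<and> V (y t) \<le> c) \<and> ((\<lambda>t. infdist (y t) Z) \<longlongrightarrow> 0) at_top))"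
proof -
  obtain r c where trap: "trapping r c"
    using trapping_exists by blast
  define W where "W = {x. infdist x Z < r}"
  have "open W"
    unfolding W_def by (intro open_Collect_less continuous_intros)
  moreover have "W \<subseteq> U"
  proof
    fix x assume "x \<in> W"
    then show "x \<in> U" by (intro trappingD(3)[OF trap]) (simp add: W_def)
  qed
  moreover have "Z \<subseteq> W"
    using trappingD(1)[OF trap] by (auto simp: W_def)
  moreover have "(\<exists>y. y 0 = p \<and> is_solution F W {0..} y) \<and>
      (\<forall>y. y 0 = p \<and> is_solution F W {0..} y \<longrightarrow>
         (\<forall>t\<ge>0. 0 \<le> V (y t) \<and> V (y t) \<le> c) \<and> ((\<lambda>t. infdist (y t) Z) \<longlongrightarrow> 0) at_top)"
    if "p \<in> {x\<in>W. 0 \<le> V x \<and> V x \<le> c}" for p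
  proof
    have "infdist p Z < r" "V p \<le> c" using that by (simp_all add: W_def)
    then obtain y where "y 0 = p" "is_solution F W {0..} y"
      unfolding W_def by (rule trapping_solution_exists[OF trap])
    then show "\<exists>y. y 0 = p \<and> is_solution F W {0..} y" by blast
    show "\<forall>y. y 0 = p \<and> is_solution F W {0..} y \<longrightarrow>
        (\<forall>t\<ge>0. 0 \<le> V (y t) \<and> V (y t) \<le> c) \<and> ((\<lambda>t. infdist (y t) Z) \<longlongrightarrow> 0) at_top"
    proof (intro allI impI)
      fix y assume "y 0 = p \<and> is_solution F W {0..} y"
      then have "is_solution F {x. infdist x Z < r} {0..} y" "V (y 0) \<le> c"
        using \<open>V p \<le> c\<close> by (simp_all add: W_def)
      from trapping_solution_converges[OF trap this]
      show "(\<forall>t\<ge>0. 0 \<le> V (y t) \<and> V (y t) \<le> c) \<and> ((\<lambda>t. infdist (y t) Z) \<longlongrightarrow> 0) at_top"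
        using V_nonneg by simp
    qed
  qed
  ultimately show ?thesis
    using trappingD(2)[OF trap] by blast
qed

end

theorem theorem3:
  fixes U :: "(real^'n) set"
    and X :: "real^'n \<Rightarrow> real^'n"
    and f :: "real^'n \<Rightarrow> real^'m"
    and x0 :: "real^'n"
    and K :: "real^'m^'m"
    and V :: "real^'n \<Rightarrow> real"
  assumes "open U"
    and "C1_on U X"
    and "C2_on U f"
    and "x0 \<in> U"
    and "sym_pos_def K"
    and V_def: "\<And>x. V x = (1/2) * ((f x - f x0) \<bullet> (K *v (f x - f x0)))"
    and "\<forall>x\<in>U. grad V x \<bullet> X x = 0"
    and "compact {x\<in>U. V x = 0}"
    and "\<forall>x\<in>{x\<in>U. V x = 0}. surj (frechet_derivative f (at x))"
  shows "\<exists>c>0. \<exists>W. open W \<and> W \<subseteq> U \<and> {x\<in>U. V x = 0} \<subseteq> W \<and>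
    (\<forall>p\<in>{x\<in>W. 0 \<le> V x \<and> V x \<le> c}.
       (\<exists>y. y 0 = p \<and> is_solution (\<lambda>x. X x - grad V x) W {0..} y) \<and>
       (\<forall>y. y 0 = p \<and> is_solution (\<lambda>x. X x - grad V x) W {0..} y \<longrightarrow>
          (\<forall>t\<ge>0. 0 \<le> V (y t) \<and> V (y t) \<le> c) \<and>
          ((\<lambda>t. infdist (y t) {x\<in>U. V x = 0}) \<longlongrightarrow> 0) at_top))"
proof -
  obtain f' where f': "\<And>x. x \<in> U \<Longrightarrow> (f has_derivative blinfun_apply (f' x)) (at x)"
    and "C1_on U f'"
    using assms(3) by (auto simp: C2_on_def)
  have "gradient_flow U X f f' x0 K V"
  proof
    show "open U" "C1_on U X" "x0 \<in> U" "sym_pos_def K" "compact {x\<in>U. V x = 0}" "C1_on U f'"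
      by fact+
    show "V x = 1/2 * ((f x - f x0) \<bullet> (K *v (f x - f x0)))" for x
      by (fact V_def)
    show "(f has_derivative blinfun_apply (f' x)) (at x)" if "x \<in> U" for x
      using f' that .
    show "grad V x \<bullet> X x = 0" if "x \<in> U" for x
      using assms(7) that by blast
    show "surj (f' x)" if "x \<in> U" "V x = 0" for x
      using assms(9) that frechet_derivative_at[OF f'[OF \<open>x \<in> U\<close>]] by auto
  qed
  then show ?thesis
    by (rule gradient_flow.attracting_sublevel_neighbourhood)
qed

end
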